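(* Let $X\in\mathrm{St}(n,k)$ and $\xi=(\xi_1,\xi_2)\in\mathfrak{so}(n)\times\mathfrak{so}(k)$. The initial value problem $$\dot T(t)=-P_X^\perp\circ f_{(e^{t\xi_{1,\mathfrak h}}\xi_{1,\mathfrak p}e^{-t\xi_{1,\mathfrak h}},\ e^{t\xi_{2,\mathfrak h}}\xi_{2,\mathfrak p}e^{-t\xi_{2,\mathfrak h}})}\circ T(t),\qquad T(0)=\mathrm{id}_{N_X\mathrm{St}(n,k)}$$ has the unique solution $T\colon I\to O(N_X\mathrm{St}(n,k))$, $$T(t)=\Phi_{\exp(t\xi_{\mathfrak h})}\circ\exp\!\big(-t(P_X^\perp\circ f_{(\xi_1,\xi_2)})\big).$$
   Context: $\mathrm{St}(n,k)=\{Y\in\mathbb{R}^{n\times k}:Y^\top Y=I_k\}$; $T_X\mathrm{St}(n,k)=\{V:X^\top V+V^\top X=0\}$, $N_X\mathrm{St}(n,k)$ its Frobenius-orthogonal complement, $P_X^\perp(V)=\tfrac12X(X^\top V+V^\top X)$, $f_{(\zeta_1,\zeta_2)}(V)=\zeta_1V-V\zeta_2$, $\Phi_{(R,\theta)}(V)=RV\theta^\top$; $P_X^\perp\circ f_{(\xi_1,\xi_2)}$ is regarded as an endomorphism of $N_X\mathrm{St}(n,k)$, and $O(N_X\mathrm{St}(n,k))$ is its orthogonal group for the Frobenius product. On $\mathfrak{so}(n)\times\mathfrak{so}(k)$ use $\langle(\Omega_1,\Psi_1),(\Omega_2,\Psi_2)\rangle=-\operatorname{tr}(\Omega_1\Omega_2)+2\operatorname{tr}(\Psi_1\Psi_2)$;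 $\mathfrak h=\{(\Omega,\eta):\Omega X=X\eta\}$, $\mathfrak p=\mathfrak h^\perp$, and $\xi_{\mathfrak h}=(\xi_{1,\mathfrak h},\xi_{2,\mathfrak h})$, $\xi_{\mathfrak p}=(\xi_{1,\mathfrak p},\xi_{2,\mathfrak p})$ are the components of $\xi$ in $\mathfrak h\oplus\mathfrak p$; $\exp(t\xi_{\mathfrak h})=(e^{t\xi_{1,\mathfrak h}},e^{t\xi_{2,\mathfrak h}})$. *)

theory Defs
  imports "HOL-Analysis.Analysis"
begin

text \<open>Real n x k matrices are modelled as real^'k^'n (index types 'n, 'k fix the dimensions).
 The Frobenius inner product is the Euclidean inner product on real^'k^'n.\<close>

definition stiefel :: "(real^'k^'n) set" where
  "stiefel = {Y. transpose Y ** Y = mat 1}"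

definition skew :: "real^'m^'m \<Rightarrow> bool" where
  "skew A \<longleftrightarrow> transpose A = - A"

definition tangent_sp :: "real^'k^'n \<Rightarrow> (real^'k^'n) set" where
  "tangent_sp X = {V. transpose X ** V + transpose V ** X = 0}"

definition normal_sp :: "real^'k^'n \<Rightarrow> (real^'k^'n) set" where
  "normal_sp X = {V. \<forall>W\<in>tangent_sp X. V \<bullet> W = 0}"

definition Pperp :: "real^'k^'n \<Rightarrow> real^'k^'n \<Rightarrow> real^'k^'n" where
  "Pperp X V = (1/2) *\<^sub>R (X ** (transpose X ** V + transpose V ** X))"

definition fmap :: "(real^'n^'n) \<times> (real^'k^'k) \<Rightarrow> real^'k^'n \<Rightarrow> real^'k^'n" where
  "fmap z V = fst z ** V - V ** snd z"

definition Phi :: "(real^'n^'n) \<times> (real^'k^'k) \<Rightarrow> real^'k^'n \<Rightarrow> real^'k^'n" where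
  "Phi g V = fst g ** V ** transpose (snd g)"

primrec matpow :: "real^'m^'m \<Rightarrow> nat \<Rightarrow> real^'m^'m" where
  "matpow A 0 = mat 1"
| "matpow A (Suc m) = A ** matpow A m"

definition mexp :: "real^'m^'m \<Rightarrow> real^'m^'m" where
  "mexp A = (\<Sum>m. (1 / fact m) *\<^sub>R matpow A m)"

definition opexp :: "('v::real_normed_vector \<Rightarrow> 'v) \<Rightarrow> 'v \<Rightarrow> 'v" where
  "opexp L V = (\<Sum>m. (1 / fact m) *\<^sub>R (L ^^ m) V)"

definition ipso :: "(real^'n^'n) \<times> (real^'k^'k) \<Rightarrow> (real^'n^'n) \<times> (real^'k^'k) \<Rightarrow> real" where
  "ipso a b = - trace (fst a ** fst b) + 2 * trace (snd a ** snd b)"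

definition hsub :: "real^'k^'n \<Rightarrow> ((real^'n^'n) \<times> (real^'k^'k)) set" where
  "hsub X = {(Om, eta). skew Om \<and> skew eta \<and> Om ** X = X ** eta}"

definition hcomp :: "real^'k^'n \<Rightarrow> (real^'n^'n) \<times> (real^'k^'k) \<Rightarrow> (real^'n^'n) \<times> (real^'k^'k)" where
  "hcomp X xi = (THE eta. eta \<in> hsub X \<and> (\<forall>z\<in>hsub X. ipso (xi - eta) z = 0))"

definition pcomp :: "real^'k^'n \<Rightarrow> (real^'n^'n) \<times> (real^'k^'k) \<Rightarrow> (real^'n^'n) \<times> (real^'k^'k)" where
  "pcomp X xi = xi - hcomp X xi"

definition xit :: "real^'k^'n \<Rightarrow> (real^'n^'n) \<times> (real^'k^'k) \<Rightarrow> real \<Rightarrow> (real^'n^'n) \<times> (real^'k^'k)" where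
  "xit X xi t =
     (mexp (t *\<^sub>R fst (hcomp X xi)) ** fst (pcomp X xi) ** mexp (- t *\<^sub>R fst (hcomp X xi)),
      mexp (t *\<^sub>R snd (hcomp X xi)) ** snd (pcomp X xi) ** mexp (- t *\<^sub>R snd (hcomp X xi)))"

text \<open>T : I \<rightarrow> End(N_X St) solves the IVP (values of T t outside N_X are irrelevant).\<close>
definition is_solution ::
  "real^'k^'n \<Rightarrow> (real^'n^'n) \<times> (real^'k^'k) \<Rightarrow> real set \<Rightarrow> (real \<Rightarrow> real^'k^'n \<Rightarrow> real^'k^'n) \<Rightarrow> bool" where
  "is_solution X xi I T \<longleftrightarrow>
     (\<forall>t\<in>I. \<forall>V\<in>normal_sp X. T t V \<in> normal_sp X) \<and>
     (\<forall>t\<in>I. \<forall>V\<in>normal_sp X. \<forall>W\<in>normal_sp X. \<forall>a b. T t (a *\<^sub>R V + b *\<^sub>R W) = a *\<^sub>R T t V + b *\<^sub>R T t W) \<and>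
     (\<forall>V\<in>normal_sp X. T 0 V = V) \<and>
     (\<forall>t\<in>I. \<forall>V\<in>normal_sp X.
        ((\<lambda>s. T s V) has_vector_derivative (- Pperp X (fmap (xit X xi t) (T t V)))) (at t within I))"

definition in_orth_normal :: "real^'k^'n \<Rightarrow> (real^'k^'n \<Rightarrow> real^'k^'n) \<Rightarrow> bool" where
  "in_orth_normal X L \<longleftrightarrow>
     (\<forall>V\<in>normal_sp X. \<forall>W\<in>normal_sp X. \<forall>a b. L (a *\<^sub>R V + b *\<^sub>R W) = a *\<^sub>R L V + b *\<^sub>R L W) \<and>
     L ` normal_sp X = normal_sp X \<and>
     (\<forall>V\<in>normal_sp X. \<forall>W\<in>normal_sp X. L V \<bullet> L W = V \<bullet> W)"

end

theory Submission
  imports Defs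
begin

(* Split xi = xi_h + xi_p along h + p. For (Omega, eta) in h we have Omega X = X eta, so
   g(t) = (exp (t xi_1h), exp (t xi_2h)) is a curve of pairs of orthogonal matrices with
   g_1(t) X = X g_2(t). Hence Phi_g(t) is an isometry commuting with P_X^perp and conjugating
   f_(xi_p) into f_(Ad_g(t) xi_p), while f_(xi_h) maps the normal space to itself. Differentiating
   Phi_g(t) (E(t) V) with E(t) = exp (-t P_X^perp f_xi), the f_(xi_h)-terms coming from g(t) and
   from P_X^perp f_xi cancel, which leaves the right-hand side of the equation.
   For skew xi, P_X^perp f_xi is skew-adjoint on the normal space, so the inner product of two
   solutions is constant in t: this gives uniqueness, orthogonality of E(t) and the group law
   E(s) E(t) = E(s + t), hence invertibility. The h-component exists and is unique although the
   form on so(n) x so(k) is indefinite: an explicit projection and a reflection argument handle it. *)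


section \<open>Exponential series of a bounded linear map\<close>

definition exp_orbit :: "('v::real_normed_vector \<Rightarrow> 'v) \<Rightarrow> 'v \<Rightarrow> real \<Rightarrow> 'v" where
  "exp_orbit L v t = (\<Sum>n. (t ^ n / fact n) *\<^sub>R (L ^^ n) v)"

lemma norm_funpow_le:
  fixes L :: "'v::real_normed_vector \<Rightarrow> 'v"
  assumes "\<And>x. norm (L x) \<le> norm x * K" "0 \<le> K"
  shows "norm ((L ^^ n) v) \<le> norm v * K ^ n"
proof (induction n)
  case (Suc n)
  have "norm ((L ^^ Suc n) v) \<le> norm ((L ^^ n) v) * K" using assms(1)[of "(L ^^ n) v"] by simp
  also have "\<dots> \<le> norm v * K ^ n * K" using Suc assms(2) by (rule mult_right_mono)
  finally show ?case by (simp add: algebra_simps)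
qed simp

lemma exp_orbit_summable:
  fixes L :: "'v::banach \<Rightarrow> 'v"
  assumes "bounded_linear L"
  shows "summable (\<lambda>n. (t ^ n / fact n) *\<^sub>R (L ^^ n) v)"
proof -
  obtain K where K: "0 < K" "\<And>x. norm (L x) \<le> norm x * K"
    using bounded_linear.pos_bounded[OF assms] by blast
  show ?thesis
  proof (rule summable_norm_cancel, rule summable_comparison_test')
    show "summable (\<lambda>n. norm v * ((\<bar>t\<bar> * K) ^ n / fact n))"
      using summable_exp_generic[of "\<bar>t\<bar> * K"]
      by (intro summable_mult) (simp add: divide_inverse mult.commute)
    fix n
    have "norm ((t ^ n / fact n) *\<^sub>R (L ^^ n) v) = (\<bar>t\<bar> ^ n / fact n) * norm ((L ^^ n) v)"
      by (simp add: power_abs)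
    also have "\<dots> \<le> (\<bar>t\<bar> ^ n / fact n) * (norm v * K ^ n)"
      using norm_funpow_le[OF K(2)] K(1) by (intro mult_left_mono) auto
    also have "\<dots> = norm v * ((\<bar>t\<bar> * K) ^ n / fact n)"
      by (simp add: power_mult_distrib)
    finally show "norm (norm ((t ^ n / fact n) *\<^sub>R (L ^^ n) v)) \<le> norm v * ((\<bar>t\<bar> * K) ^ n / fact n)"
      by simp
  qed
qed

lemma exp_orbit_0 [simp]: "exp_orbit L v 0 = v"
proof -
  have "exp_orbit L v 0 = (\<Sum>n<1. ((0::real) ^ n / fact n) *\<^sub>R (L ^^ n) v)"
    unfolding exp_orbit_def by (rule suminf_finite) auto
  then show ?thesis by simp
qed

lemma exp_orbit_intertwine:
  fixes L :: "'v::banach \<Rightarrow> 'v"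
  assumes L: "bounded_linear L" and F: "bounded_linear F" and FL: "\<And>u. F (L u) = L' (F u)"
  shows "F (exp_orbit L v t) = exp_orbit L' (F v) t"
proof -
  have "F ((L ^^ n) v) = (L' ^^ n) (F v)" for n
    by (induction n) (simp_all add: FL)
  then show ?thesis
    unfolding exp_orbit_def bounded_linear.suminf[OF F exp_orbit_summable[OF L]]
    by (simp add: linear_scale[OF bounded_linear.linear[OF F]])
qed

lemma exp_orbit_in_subspace:
  fixes L :: "'v::euclidean_space \<Rightarrow> 'v"
  assumes L: "bounded_linear L" and S: "subspace S" "L ` S \<subseteq> S" and v: "v \<in> S"
  shows "exp_orbit L v t \<in> S"
proof -
  have "(L ^^ n) v \<in> S" for n
    by (induction n) (use v S(2) in auto)
  then have "(\<Sum>n<m. (t ^ n / fact n) *\<^sub>R (L ^^ n) v) \<in> S" for m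
    by (intro subspace_sum[OF S(1)] subspace_scale[OF S(1)])
  moreover have "(\<lambda>m. \<Sum>n<m. (t ^ n / fact n) *\<^sub>R (L ^^ n) v) \<longlonglongrightarrow> exp_orbit L v t"
    unfolding exp_orbit_def by (rule summable_LIMSEQ[OF exp_orbit_summable[OF L]])
  ultimately show ?thesis
    by (rule closed_sequentially[OF closed_subspace[OF S(1)]])
qed

lemma linear_exp_orbit:
  fixes L :: "'v::banach \<Rightarrow> 'v"
  assumes L: "bounded_linear L"
  shows "linear (\<lambda>v. exp_orbit L v t)"
proof (rule linearI)
  have lin: "linear (L ^^ n)" for n
    by (induction n)
      (simp_all add: linear_compose[of _ L, unfolded o_def] bounded_linear.linear[OF L]
        linear_id[unfolded id_def])
  note sums = summable_sums[OF exp_orbit_summable[OF L]]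
  fix v w :: 'v and c :: real
  show "exp_orbit L (v + w) t = exp_orbit L v t + exp_orbit L w t"
    unfolding exp_orbit_def using sums_add[OF sums[of t v] sums[of t w]]
    by (intro sums_unique[symmetric]) (simp add: linear_add[OF lin] scaleR_add_right)
  show "exp_orbit L (c *\<^sub>R v) t = c *\<^sub>R exp_orbit L v t"
    unfolding exp_orbit_def using sums_scaleR_right[OF sums[of t v], of c]
    by (intro sums_unique[symmetric]) (simp add: linear_scale[OF lin] mult.commute)
qed

lemma has_vector_derivative_exp_orbit:
  fixes L :: "'v::euclidean_space \<Rightarrow> 'v"
  assumes L: "bounded_linear L"
  shows "(exp_orbit L v has_vector_derivative L (exp_orbit L v t)) (at t within S)"
proof -
  note summable = exp_orbit_summable[OF L]
  have "(exp_orbit L v has_derivative (\<lambda>h. h *\<^sub>R exp_orbit L (L v) t)) (at t)"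
  proof (rule has_derivative_componentwise_within[where S = UNIV, THEN iffD2], intro ballI)
    fix b :: 'v
    define c where "c n = ((L ^^ n) v \<bullet> b) / fact n" for n
    have series: "exp_orbit L w s \<bullet> b = (\<Sum>n. ((L ^^ n) w \<bullet> b) / fact n * s ^ n)" for w s
      unfolding exp_orbit_def bounded_linear.suminf[OF bounded_linear_inner_left summable]
      by (simp add: mult.commute)
    have "summable (\<lambda>n. c n * s ^ n)" for s
      using bounded_linear.summable[OF bounded_linear_inner_left summable[of s v], of b]
      by (simp add: c_def field_simps)
    then have "((\<lambda>s. \<Sum>n. c n * s ^ n) has_field_derivative (\<Sum>n. diffs c n * t ^ n)) (at t)"
      by (rule termdiffs_strong_converges_everywhere)
    moreover have "diffs c n * t ^ n = ((L ^^ n) (L v) \<bullet> b) / fact n * t ^ n" for n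
      by (simp add: diffs_def c_def funpow_swap1 field_simps del: of_nat_Suc)
    ultimately have "((\<lambda>s. exp_orbit L v s \<bullet> b) has_field_derivative exp_orbit L (L v) t \<bullet> b) (at t)"
      by (simp add: series c_def)
    then show "((\<lambda>s. exp_orbit L v s \<bullet> b) has_derivative
        (\<lambda>h. h *\<^sub>R exp_orbit L (L v) t \<bullet> b)) (at t)"
      by (simp add: has_field_derivative_def mult_commute_abs)
  qed
  moreover have "exp_orbit L (L v) t = L (exp_orbit L v t)"
    by (rule exp_orbit_intertwine[OF L L, symmetric]) simp
  ultimately show ?thesis
    by (simp add: has_vector_derivative_def has_derivative_at_withinI)
qed

lemma opexp_scaleR_eq_exp_orbit:
  assumes "linear K"
  shows "opexp (\<lambda>W. t *\<^sub>R K W) V = exp_orbit K V t"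
proof -
  have "((\<lambda>W. t *\<^sub>R K W) ^^ n) V = t ^ n *\<^sub>R (K ^^ n) V" for n
    by (induction n) (simp_all add: linear_scale[OF assms])
  then show ?thesis
    unfolding opexp_def exp_orbit_def by (simp add: divide_inverse mult.commute)
qed

section \<open>Skew-adjoint linear equations\<close>

lemma skew_linear_ode_inner_const:
  fixes y z :: "real \<Rightarrow> 'v::real_inner"
  assumes I: "convex I" and s: "s \<in> I" and t: "t \<in> I"
    and S: "\<And>r. r \<in> I \<Longrightarrow> y r \<in> S \<and> z r \<in> S"
    and skew: "\<And>r u w. r \<in> I \<Longrightarrow> u \<in> S \<Longrightarrow> w \<in> S \<Longrightarrow> A r u \<bullet> w = - (u \<bullet> A r w)"
    and y: "\<And>r. r \<in> I \<Longrightarrow> (y has_vector_derivative A r (y r)) (at r within I)"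
    and z: "\<And>r. r \<in> I \<Longrightarrow> (z has_vector_derivative A r (z r)) (at r within I)"
  shows "y t \<bullet> z t = y s \<bullet> z s"
proof -
  have "\<exists>c. \<forall>r\<in>I. y r \<bullet> z r = c"
  proof (rule has_derivative_zero_constant[OF I])
    fix r assume r: "r \<in> I"
    have "((\<lambda>r. y r \<bullet> z r) has_vector_derivative y r \<bullet> A r (z r) + A r (y r) \<bullet> z r) (at r within I)"
      by (rule bounded_bilinear.has_vector_derivative[OF bounded_bilinear_inner y[OF r] z[OF r]])
    moreover have "y r \<bullet> A r (z r) + A r (y r) \<bullet> z r = 0"
      using skew[OF r] S[OF r] by simp
    ultimately show "((\<lambda>r. y r \<bullet> z r) has_derivative (\<lambda>h. 0)) (at r within I)"
      by (simp add: has_vector_derivative_def)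
  qed
  then show ?thesis using s t by metis
qed

lemma skew_linear_ode_unique:
  fixes y z :: "real \<Rightarrow> 'v::real_inner"
  assumes I: "convex I" and a: "a \<in> I" and t: "t \<in> I"
    and S: "subspace S" "\<And>r. r \<in> I \<Longrightarrow> y r \<in> S \<and> z r \<in> S"
    and A: "\<And>r. r \<in> I \<Longrightarrow> linear (A r)"
    and skew: "\<And>r u w. r \<in> I \<Longrightarrow> u \<in> S \<Longrightarrow> w \<in> S \<Longrightarrow> A r u \<bullet> w = - (u \<bullet> A r w)"
    and y: "\<And>r. r \<in> I \<Longrightarrow> (y has_vector_derivative A r (y r)) (at r within I)"
    and z: "\<And>r. r \<in> I \<Longrightarrow> (z has_vector_derivative A r (z r)) (at r within I)"
    and init: "y a = z a"
  shows "y t = z t"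
proof -
  let ?d = "\<lambda>r. y r - z r"
  have "((\<lambda>r. y r - z r) has_vector_derivative A r (?d r)) (at r within I)" if "r \<in> I" for r
    using has_vector_derivative_diff[OF y[OF that] z[OF that]] by (simp add: linear_diff[OF A[OF that]])
  moreover have "?d r \<in> S" if "r \<in> I" for r
    using S that by (simp add: subspace_diff)
  ultimately have "?d t \<bullet> ?d t = ?d a \<bullet> ?d a"
    by (intro skew_linear_ode_inner_const[OF I a t, where A = A and S = S] skew) auto
  then show ?thesis using init by simp
qed

lemma matrix_add_rdistrib: "((A::'a::semiring_1^'m^'n) + B) ** C = A ** C + B ** C"
  by (simp add: matrix_matrix_mult_def vec_eq_iff sum.distrib distrib_right)

lemma matrix_diff_ldistrib: "(A::'a::ring_1^'m^'n) ** (B - C) = A ** B - A ** C"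
  by (simp add: matrix_matrix_mult_def vec_eq_iff sum_subtractf right_diff_distrib)

lemma matrix_diff_rdistrib: "((A::'a::ring_1^'m^'n) - B) ** C = A ** C - B ** C"
  by (simp add: matrix_matrix_mult_def vec_eq_iff sum_subtractf left_diff_distrib)

lemma matrix_minus_left: "(- (A::'a::ring_1^'m^'n)) ** B = - (A ** B)"
  by (simp add: matrix_matrix_mult_def vec_eq_iff sum_negf)

lemma matrix_minus_right: "(A::'a::ring_1^'m^'n) ** (- B) = - (A ** B)"
  by (simp add: matrix_matrix_mult_def vec_eq_iff sum_negf)

lemma transpose_add: "transpose ((A::'a::semiring_1^'m^'n) + B) = transpose A + transpose B"
  by (simp add: transpose_def vec_eq_iff)

lemma transpose_diff: "transpose ((A::'a::ring_1^'m^'n) - B) = transpose A - transpose B"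
  by (simp add: transpose_def vec_eq_iff)

lemma transpose_minus: "transpose (- (A::'a::ring_1^'m^'n)) = - transpose A"
  by (simp add: transpose_def vec_eq_iff)

lemmas matrix_algebra_simps =
  matrix_add_ldistrib matrix_add_rdistrib matrix_diff_ldistrib matrix_diff_rdistrib
  matrix_minus_left matrix_minus_right scalar_matrix_assoc[symmetric] matrix_scalar_ac
  matrix_mul_assoc transpose_add transpose_diff transpose_minus transpose_scalar matrix_transpose_mul

lemma bounded_linear_matrix_mult_left: "bounded_linear (\<lambda>B::real^'k^'m. (A::real^'m^'n) ** B)"
  by (auto simp: linear_conv_bounded_linear[symmetric] matrix_algebra_simps intro!: linearI)

lemma bounded_linear_matrix_mult_right: "bounded_linear (\<lambda>B::real^'m^'n. B ** (A::real^'k^'m))"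
  by (auto simp: linear_conv_bounded_linear[symmetric] matrix_algebra_simps intro!: linearI)

lemma bounded_linear_transpose: "bounded_linear (transpose :: real^'m^'n \<Rightarrow> real^'n^'m)"
  by (auto simp: linear_conv_bounded_linear[symmetric] matrix_algebra_simps intro!: linearI)

lemma bounded_bilinear_matrix_mult: "bounded_bilinear ((**) :: real^'m^'n \<Rightarrow> real^'k^'m \<Rightarrow> real^'k^'n)"
  by (simp add: bilinear_conv_bounded_bilinear[symmetric] bilinear_def
      bounded_linear.linear[OF bounded_linear_matrix_mult_left]
      bounded_linear.linear[OF bounded_linear_matrix_mult_right])

lemma inner_matrix_mult_left: "((A::real^'m^'n) ** B) \<bullet> (C::real^'k^'n) = B \<bullet> (transpose A ** C)"
  unfolding inner_vec_def matrix_matrix_mult_def transpose_def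
  by (simp add: sum_distrib_left sum_distrib_right mult_ac sum.swap[of _ "UNIV::'n set"])
    (subst sum.swap, simp)

lemma inner_matrix_mult_right: "((A::real^'m^'n) ** B) \<bullet> (C::real^'k^'n) = A \<bullet> (C ** transpose B)"
  unfolding inner_vec_def matrix_matrix_mult_def transpose_def
  by (simp add: sum_distrib_left sum_distrib_right mult_ac) (subst sum.swap, simp)

lemma inner_transpose: "transpose (A::real^'m^'n) \<bullet> transpose B = A \<bullet> B"
  unfolding inner_vec_def transpose_def by simp (subst sum.swap, simp)

lemma trace_transpose_mult: "trace (transpose (A::real^'m^'n) ** B) = A \<bullet> B"
  unfolding inner_vec_def matrix_matrix_mult_def transpose_def trace_def
  by simp (subst sum.swap, simp)

lemma skew_diff: "skew A \<Longrightarrow> skew B \<Longrightarrow> skew (A - B)"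
  unfolding skew_def by (simp add: transpose_diff)

lemma skew_conj: "skew A \<Longrightarrow> skew (X ** A ** transpose X)"
  unfolding skew_def by (simp add: matrix_transpose_mul matrix_minus_left matrix_minus_right matrix_mul_assoc)

lemma trace_skew_mult: "skew A \<Longrightarrow> trace (A ** B) = - (A \<bullet> B)"
  using trace_transpose_mult[of A B] unfolding skew_def
  by (simp add: matrix_minus_left trace_def sum_negf)

section \<open>The matrix exponential\<close>

lemma mexp_scaleR_eq_exp_orbit: "mexp (t *\<^sub>R A) = exp_orbit ((**) A) (mat 1) t"
proof -
  have "matpow (t *\<^sub>R A) n = (t ^ n) *\<^sub>R ((**) A ^^ n) (mat 1)" for n
    by (induction n) (simp_all add: matrix_algebra_simps)
  then show ?thesis
    unfolding mexp_def exp_orbit_def by (simp add: divide_inverse mult.commute)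
qed

lemma mexp_scaleR_eq_exp_orbit_right: "mexp (t *\<^sub>R A) = exp_orbit (\<lambda>M. M ** A) (mat 1) t"
proof -
  have comm: "A ** ((**) A ^^ n) (mat 1) = ((**) A ^^ n) (mat 1) ** A" for n
    by (induction n) (simp_all add: matrix_mul_assoc)
  have "((**) A ^^ n) (mat 1) = ((\<lambda>M. M ** A) ^^ n) (mat 1)" for n
  proof (induction n)
    case (Suc n)
    then show ?case using comm[of n] by simp
  qed simp
  then show ?thesis
    unfolding mexp_scaleR_eq_exp_orbit exp_orbit_def by simp
qed

lemma has_vector_derivative_mexp_scaleR:
  "((\<lambda>t. mexp (t *\<^sub>R A)) has_vector_derivative A ** mexp (t *\<^sub>R A)) (at t within S)"
  unfolding mexp_scaleR_eq_exp_orbit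
  by (rule has_vector_derivative_exp_orbit[OF bounded_linear_matrix_mult_left])

lemma mexp_0 [simp]: "mexp (0 :: real^'m^'m) = mat 1"
  using mexp_scaleR_eq_exp_orbit[of 0] by simp

lemma mexp_scaleR_intertwine:
  assumes "A ** X = X ** B"
  shows "mexp (t *\<^sub>R A) ** X = X ** mexp (t *\<^sub>R B)"
proof -
  have "(\<lambda>M. M ** X) (exp_orbit ((**) A) (mat 1) t) = exp_orbit ((**) A) ((\<lambda>M. M ** X) (mat 1)) t"
    by (rule exp_orbit_intertwine[OF bounded_linear_matrix_mult_left bounded_linear_matrix_mult_right])
      (simp add: matrix_mul_assoc)
  moreover have "(**) X (exp_orbit ((**) B) (mat 1) t) = exp_orbit ((**) A) ((**) X (mat 1)) t"
    by (rule exp_orbit_intertwine[OF bounded_linear_matrix_mult_left bounded_linear_matrix_mult_left])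
      (simp add: matrix_mul_assoc assms)
  ultimately show ?thesis
    by (simp add: mexp_scaleR_eq_exp_orbit)
qed

lemma transpose_mexp_scaleR: "transpose (mexp (t *\<^sub>R A)) = mexp (t *\<^sub>R transpose A)"
proof -
  have "transpose (exp_orbit ((**) A) (mat 1) t) = exp_orbit (\<lambda>M. M ** transpose A) (transpose (mat 1)) t"
    by (rule exp_orbit_intertwine[OF bounded_linear_matrix_mult_left bounded_linear_transpose])
      (simp add: matrix_transpose_mul)
  then show ?thesis
    by (simp add: mexp_scaleR_eq_exp_orbit flip: mexp_scaleR_eq_exp_orbit_right)
qed

lemma mexp_scaleR_inverse: "mexp (t *\<^sub>R A) ** mexp ((- t) *\<^sub>R A) = mat 1"
proof -
  let ?F = "\<lambda>t. mexp (t *\<^sub>R A) ** mexp (t *\<^sub>R (- A))"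
  have "\<exists>c. \<forall>s\<in>UNIV. ?F s = c"
  proof (rule has_derivative_zero_constant)
    fix s :: real
    have "(?F has_vector_derivative
        mexp (s *\<^sub>R A) ** ((- A) ** mexp (s *\<^sub>R (- A)))
          + (A ** mexp (s *\<^sub>R A)) ** mexp (s *\<^sub>R (- A)))
        (at s within UNIV)"
      by (rule bounded_bilinear.has_vector_derivative[OF bounded_bilinear_matrix_mult
            has_vector_derivative_mexp_scaleR has_vector_derivative_mexp_scaleR])
    moreover have "A ** mexp (s *\<^sub>R A) = mexp (s *\<^sub>R A) ** A"
      using mexp_scaleR_intertwine[of A A A s] by simp
    ultimately show "(?F has_derivative (\<lambda>h. 0)) (at s within UNIV)"
      by (simp add: has_vector_derivative_def matrix_algebra_simps)
  qed simp
  then obtain c where "\<And>s. ?F s = c" by blast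
  from this[of t] this[of 0] show ?thesis by simp
qed

lemma transpose_mexp_skew: "skew A \<Longrightarrow> transpose (mexp (t *\<^sub>R A)) = mexp ((- t) *\<^sub>R A)"
  by (simp add: transpose_mexp_scaleR skew_def)

lemma orthogonal_matrix_mexp_skew: "skew A \<Longrightarrow> orthogonal_matrix (mexp (t *\<^sub>R A))"
  using mexp_scaleR_inverse[of t A] mexp_scaleR_inverse[of "- t" A]
  by (simp add: orthogonal_matrix_def transpose_mexp_skew)

section \<open>The normal space of the Stiefel manifold\<close>

lemma stiefel_transpose_mult: "X \<in> stiefel \<Longrightarrow> transpose X ** X = mat 1"
  by (simp add: stiefel_def)

lemma stiefel_mult_cancel:
  assumes "X \<in> stiefel"
  shows "transpose X ** X ** C = C" "D ** transpose X ** X = D"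
  using assms by (simp_all add: stiefel_def flip: matrix_mul_assoc)

lemma linear_Pperp: "linear (Pperp X)"
  unfolding Pperp_def by (auto intro!: linearI simp: matrix_algebra_simps algebra_simps)

lemma linear_fmap: "linear (fmap z)"
  unfolding fmap_def by (auto intro!: linearI simp: matrix_algebra_simps algebra_simps)

lemma fmap_add_left: "fmap (a + b) U = fmap a U + fmap b U"
  unfolding fmap_def by (simp add: matrix_add_ldistrib matrix_add_rdistrib algebra_simps)

lemma Pperp_self_adjoint: "Pperp X U \<bullet> W = U \<bullet> Pperp X W"
proof -
  have "(X ** (transpose X ** U)) \<bullet> W = U \<bullet> (X ** (transpose X ** W))"
    using inner_matrix_mult_left[of X "transpose X ** U" W] inner_matrix_mult_left[of X "transpose X ** W" U]
    by (simp add: inner_commute)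
  moreover have "(X ** (transpose U ** X)) \<bullet> W = U \<bullet> (X ** (transpose W ** X))"
  proof -
    have "(X ** (transpose U ** X)) \<bullet> W = transpose (transpose U ** X) \<bullet> transpose (transpose X ** W)"
      by (simp add: inner_matrix_mult_left inner_transpose)
    also have "\<dots> = U \<bullet> (X ** (transpose W ** X))"
      using inner_matrix_mult_left[of "transpose X" U "transpose W ** X"]
      by (simp add: matrix_transpose_mul)
    finally show ?thesis .
  qed
  ultimately show ?thesis
    unfolding Pperp_def by (simp add: matrix_add_ldistrib inner_add_left inner_add_right)
qed

lemma Pperp_tangent_sp: "W \<in> tangent_sp X \<Longrightarrow> Pperp X W = 0"
  unfolding tangent_sp_def Pperp_def by simp

lemma Pperp_in_normal_sp: "Pperp X U \<in> normal_sp X"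
  unfolding normal_sp_def by (auto simp: Pperp_self_adjoint Pperp_tangent_sp)

lemma subspace_normal_sp: "subspace (normal_sp X)"
  unfolding normal_sp_def subspace_def by (auto simp: inner_add_left)

lemma Pperp_normal_sp:
  assumes X: "X \<in> stiefel" and V: "V \<in> normal_sp X"
  shows "Pperp X V = V"
proof -
  let ?M = "transpose X ** V + transpose V ** X"
  have "transpose X ** Pperp X V = (1/2) *\<^sub>R ?M"
    unfolding Pperp_def by (simp add: matrix_algebra_simps stiefel_transpose_mult[OF X] scaleR_add_right)
  moreover have "transpose (Pperp X V) ** X = (1/2) *\<^sub>R ?M"
    unfolding Pperp_def
    by (simp add: matrix_algebra_simps stiefel_transpose_mult[OF X] add.commute flip: matrix_mul_assoc)
  ultimately have "V - Pperp X V \<in> tangent_sp X"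
    unfolding tangent_sp_def
    by (simp add: matrix_algebra_simps algebra_simps flip: scaleR_add_left)
  moreover have "V - Pperp X V \<in> normal_sp X"
    by (rule subspace_diff[OF subspace_normal_sp V Pperp_in_normal_sp])
  ultimately have "(V - Pperp X V) \<bullet> (V - Pperp X V) = 0"
    unfolding normal_sp_def by blast
  then show ?thesis by simp
qed

lemma fmap_skew_adjoint:
  assumes "skew (fst z)" "skew (snd z)"
  shows "fmap z U \<bullet> W = - (U \<bullet> fmap z W)"
proof -
  have "(fst z ** U) \<bullet> W = - (U \<bullet> (fst z ** W))"
    using assms(1) by (simp add: inner_matrix_mult_left skew_def matrix_minus_left)
  moreover have "(U ** snd z) \<bullet> W = - (U \<bullet> (W ** snd z))"
    using assms(2) by (simp add: inner_matrix_mult_right skew_def matrix_minus_right)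
  ultimately show ?thesis
    unfolding fmap_def by (simp add: inner_diff_left inner_diff_right)
qed

lemma Pperp_fmap_skew_adjoint:
  assumes X: "X \<in> stiefel" and z: "skew (fst z)" "skew (snd z)"
    and V: "V \<in> normal_sp X" and W: "W \<in> normal_sp X"
  shows "Pperp X (fmap z V) \<bullet> W = - (V \<bullet> Pperp X (fmap z W))"
  using fmap_skew_adjoint[OF z, of V W]
  by (simp add: Pperp_self_adjoint Pperp_normal_sp[OF X] V W flip: Pperp_self_adjoint[of X V])

section \<open>The stabiliser of a point\<close>

definition stabilizer :: "real^'k^'n \<Rightarrow> ((real^'n^'n) \<times> (real^'k^'k)) set" where
  "stabilizer X = {(G1, G2). orthogonal_matrix G1 \<and> orthogonal_matrix G2 \<and> G1 ** X = X ** G2}"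

lemma linear_Phi: "linear (Phi g)"
  unfolding Phi_def by (auto intro!: linearI simp: matrix_algebra_simps)

lemma Phi_inner:
  assumes "orthogonal_matrix G1" "orthogonal_matrix G2"
  shows "Phi (G1, G2) U \<bullet> Phi (G1, G2) W = U \<bullet> W"
proof -
  have "Phi (G1, G2) U \<bullet> Phi (G1, G2) W = (G1 ** (U ** transpose G2)) \<bullet> (G1 ** (W ** transpose G2))"
    by (simp add: Phi_def matrix_mul_assoc)
  also have "\<dots> = (U ** transpose G2) \<bullet> (W ** transpose G2)"
    using assms(1) inner_matrix_mult_left[of G1 "U ** transpose G2" "G1 ** (W ** transpose G2)"]
    by (simp add: matrix_mul_assoc orthogonal_matrix_def)
  also have "\<dots> = U \<bullet> (W ** (transpose G2 ** G2))"
    by (simp add: inner_matrix_mult_right matrix_mul_assoc)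
  also have "\<dots> = U \<bullet> W"
    using assms(2) by (simp add: orthogonal_matrix_def)
  finally show ?thesis .
qed

lemma Phi_transpose_Phi:
  assumes "orthogonal_matrix G1" "orthogonal_matrix G2"
  shows "Phi (transpose G1, transpose G2) (Phi (G1, G2) V) = V"
proof -
  have "Phi (transpose G1, transpose G2) (Phi (G1, G2) V) =
      (transpose G1 ** G1) ** V ** (transpose G2 ** G2)"
    by (simp add: Phi_def matrix_mul_assoc)
  then show ?thesis
    using assms by (simp add: orthogonal_matrix_def)
qed

lemma Phi_fmap:
  assumes "orthogonal_matrix G1" "orthogonal_matrix G2"
  shows "Phi (G1, G2) (fmap z U) =
    fmap (G1 ** fst z ** transpose G1, G2 ** snd z ** transpose G2) (Phi (G1, G2) U)"
proof -
  have "G1 ** fst z ** transpose G1 ** (G1 ** U ** transpose G2) =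
      G1 ** fst z ** (transpose G1 ** G1) ** U ** transpose G2"
    "G1 ** U ** transpose G2 ** (G2 ** snd z ** transpose G2) =
      G1 ** U ** (transpose G2 ** G2) ** snd z ** transpose G2"
    by (simp_all add: matrix_mul_assoc)
  with assms show ?thesis
    unfolding Phi_def fmap_def orthogonal_matrix_def
    by (simp add: matrix_diff_ldistrib matrix_diff_rdistrib matrix_mul_assoc)
qed

lemma stabilizer_transpose:
  assumes "(G1, G2) \<in> stabilizer X"
  shows "transpose G1 ** X = X ** transpose G2" "transpose X ** G1 = G2 ** transpose X"
proof -
  from assms have G: "orthogonal_matrix G1" "orthogonal_matrix G2" "G1 ** X = X ** G2"
    unfolding stabilizer_def by auto
  have "transpose G1 ** X = transpose G1 ** (X ** G2) ** transpose G2"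
    using G(2) by (simp add: orthogonal_matrix_def matrix_mul_assoc[symmetric])
  also have "\<dots> = (transpose G1 ** G1) ** X ** transpose G2"
    by (simp add: G(3)[symmetric] matrix_mul_assoc)
  finally show *: "transpose G1 ** X = X ** transpose G2"
    using G(1) by (simp add: orthogonal_matrix_def)
  show "transpose X ** G1 = G2 ** transpose X"
    using arg_cong[OF *, of transpose] by (simp add: matrix_transpose_mul)
qed

lemma stabilizer_transpose_closed:
  assumes "(G1, G2) \<in> stabilizer X"
  shows "(transpose G1, transpose G2) \<in> stabilizer X"
  using assms stabilizer_transpose(1)[OF assms] unfolding stabilizer_def by simp

lemma Phi_Pperp:
  assumes g: "(G1, G2) \<in> stabilizer X"
  shows "Phi (G1, G2) (Pperp X U) = Pperp X (Phi (G1, G2) U)"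
proof -
  have G1X: "G1 ** X = X ** G2" using g unfolding stabilizer_def by auto
  note GT = stabilizer_transpose[OF g]
  let ?conj = "\<lambda>M. G2 ** M ** transpose G2"
  have "G1 ** (X ** M) ** transpose G2 = X ** ?conj M" for M
    by (simp add: matrix_mul_assoc G1X)
  then have "Phi (G1, G2) (Pperp X U) = (1/2) *\<^sub>R (X ** ?conj (transpose X ** U + transpose U ** X))"
    by (simp add: Phi_def Pperp_def matrix_scalar_ac flip: scalar_matrix_assoc)
  moreover have "transpose X ** Phi (G1, G2) U = ?conj (transpose X ** U)"
    by (simp add: Phi_def matrix_mul_assoc GT(2))
  moreover have "transpose (Phi (G1, G2) U) ** X = ?conj (transpose U ** X)"
  proof -
    have "transpose (Phi (G1, G2) U) ** X = G2 ** transpose U ** (transpose G1 ** X)"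
      by (simp add: Phi_def matrix_transpose_mul matrix_mul_assoc)
    then show ?thesis by (simp add: GT(1) matrix_mul_assoc)
  qed
  ultimately show ?thesis
    by (simp add: Pperp_def matrix_add_ldistrib matrix_add_rdistrib)
qed

lemma Phi_normal_sp:
  assumes X: "X \<in> stiefel" and g: "g \<in> stabilizer X" and V: "V \<in> normal_sp X"
  shows "Phi g V \<in> normal_sp X"
proof -
  obtain G1 G2 where g_eq: "g = (G1, G2)" by (cases g)
  have "Phi g V = Pperp X (Phi g V)"
    using Phi_Pperp[of G1 G2 X V] g Pperp_normal_sp[OF X V] by (simp add: g_eq)
  then show ?thesis by (metis Pperp_in_normal_sp)
qed

section \<open>The subalgebra h\<close>

lemma hsub_transpose:
  assumes "(A, B) \<in> hsub X"
  shows "transpose X ** A = B ** transpose X"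
proof -
  have h: "transpose A = - A" "transpose B = - B" "A ** X = X ** B"
    using assms unfolding hsub_def skew_def by auto
  have "transpose X ** A = transpose (transpose A ** X)" by (simp add: matrix_transpose_mul)
  also have "\<dots> = B ** transpose X" by (simp add: h matrix_minus_left matrix_transpose_mul transpose_minus)
  finally show ?thesis .
qed

lemma hsub_diff: "a \<in> hsub X \<Longrightarrow> b \<in> hsub X \<Longrightarrow> a - b \<in> hsub X"
  unfolding hsub_def skew_def by (auto simp: transpose_diff matrix_diff_ldistrib matrix_diff_rdistrib)

lemma mexp_hsub_stabilizer:
  assumes "(A, B) \<in> hsub X"
  shows "(mexp (t *\<^sub>R A), mexp (t *\<^sub>R B)) \<in> stabilizer X"
  using assms unfolding hsub_def stabilizer_def
  by (auto intro: orthogonal_matrix_mexp_skew mexp_scaleR_intertwine)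

lemma fmap_hsub_tangent_sp:
  assumes h: "(A, B) \<in> hsub X" and W: "W \<in> tangent_sp X"
  shows "fmap (A, B) W \<in> tangent_sp X"
proof -
  let ?M = "transpose X ** W + transpose W ** X"
  have sk: "transpose A = - A" "transpose B = - B" and AX: "A ** X = X ** B"
    using h unfolding hsub_def skew_def by auto
  have "transpose X ** fmap (A, B) W = B ** (transpose X ** W) - (transpose X ** W) ** B"
    by (simp add: fmap_def matrix_diff_ldistrib matrix_mul_assoc hsub_transpose[OF h])
  moreover have "transpose (fmap (A, B) W) ** X = B ** (transpose W ** X) - transpose W ** (A ** X)"
    by (simp add: fmap_def sk transpose_diff matrix_transpose_mul matrix_diff_rdistrib matrix_minus_left
        matrix_minus_right matrix_mul_assoc)
  then have "transpose (fmap (A, B) W) ** X = B ** (transpose W ** X) - (transpose W ** X) ** B"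
    by (simp add: AX matrix_mul_assoc)
  ultimately have "transpose X ** fmap (A, B) W + transpose (fmap (A, B) W) ** X = B ** ?M - ?M ** B"
    by (simp add: matrix_add_ldistrib matrix_add_rdistrib)
  then show ?thesis
    using W unfolding tangent_sp_def by simp
qed

lemma fmap_hsub_normal_sp:
  assumes h: "(A, B) \<in> hsub X" and V: "V \<in> normal_sp X"
  shows "fmap (A, B) V \<in> normal_sp X"
  unfolding normal_sp_def
proof (intro CollectI ballI)
  fix W assume "W \<in> tangent_sp X"
  then have "V \<bullet> fmap (A, B) W = 0"
    using V fmap_hsub_tangent_sp[OF h] unfolding normal_sp_def by blast
  moreover have "fmap (A, B) V \<bullet> W = - (V \<bullet> fmap (A, B) W)"
    using h unfolding hsub_def by (intro fmap_skew_adjoint) auto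
  ultimately show "fmap (A, B) V \<bullet> W = 0" by simp
qed

lemma ipso_skew:
  "skew (fst a) \<Longrightarrow> skew (snd a) \<Longrightarrow> ipso a b = fst a \<bullet> fst b - 2 * (snd a \<bullet> snd b)"
  unfolding ipso_def by (simp add: trace_skew_mult)

lemma ipso_diff_left: "ipso (a - b) z = ipso a z - ipso b z"
  unfolding ipso_def by (simp add: matrix_diff_rdistrib trace_sub algebra_simps)

lemma inner_conj: "((X::real^'k^'n) ** M ** transpose X) \<bullet> C = M \<bullet> (transpose X ** C ** X)"
  using inner_matrix_mult_right[of "X ** M" "transpose X" C] inner_matrix_mult_left[of X M "C ** X"]
  by (simp add: matrix_mul_assoc)

lemma inner_conj_stiefel:
  "X \<in> stiefel \<Longrightarrow> (X ** M ** transpose X) \<bullet> (X ** N ** transpose X) = M \<bullet> N"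
  by (simp add: inner_conj matrix_mul_assoc stiefel_mult_cancel)

lemma hsub_inner_conj:
  assumes X: "X \<in> stiefel" and h: "(A, B) \<in> hsub X"
  shows "(X ** M ** transpose X) \<bullet> A = M \<bullet> B"
  using h unfolding inner_conj hsub_def
  by (simp add: matrix_mul_assoc[symmetric] stiefel_mult_cancel[OF X, unfolded matrix_mul_assoc[symmetric]])

lemma hsub_inner_proj_left:
  assumes "(A, B) \<in> hsub X"
  shows "(X ** transpose X ** M) \<bullet> A = (transpose X ** M ** X) \<bullet> B"
proof -
  have "(X ** transpose X ** M) \<bullet> A = (transpose X ** M) \<bullet> (transpose X ** A)"
    by (simp add: inner_matrix_mult_left flip: matrix_mul_assoc)
  also have "\<dots> = (transpose X ** M ** X) \<bullet> B"
    using inner_matrix_mult_right[of "transpose X ** M" X B]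
    by (simp add: hsub_transpose[OF assms] inner_matrix_mult_right)
  finally show ?thesis .
qed

lemma hsub_inner_proj_right:
  assumes "(A, B) \<in> hsub X"
  shows "(M ** X ** transpose X) \<bullet> A = (transpose X ** M ** X) \<bullet> B"
proof -
  have "(M ** X ** transpose X) \<bullet> A = (M ** X) \<bullet> (X ** B)"
    using assms unfolding hsub_def by (simp add: inner_matrix_mult_right)
  also have "\<dots> = (transpose X ** M ** X) \<bullet> B"
    using inner_matrix_mult_left[of X B "M ** X"] by (simp add: inner_commute matrix_mul_assoc)
  finally show ?thesis .
qed

(* ipso is indefinite even on h; pairing d = (D, delta) with (C - D', delta), where C = X delta X^T
   and D' = D - C, yields -|delta|^2 - |D'|^2 nevertheless. *)
lemma hsub_ipso_orthogonal_eq_0: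
  assumes X: "X \<in> stiefel" and "d \<in> hsub X" and "\<forall>z\<in>hsub X. ipso d z = 0"
  shows "d = 0"
proof -
  obtain D \<delta> where d_eq: "d = (D, \<delta>)" by (cases d)
  with assms have d: "(D, \<delta>) \<in> hsub X" and orth: "\<forall>z\<in>hsub X. ipso (D, \<delta>) z = 0"
    by simp_all
  have sk: "skew D" "skew \<delta>" and DX: "D ** X = X ** \<delta>"
    using d unfolding hsub_def by auto
  define C where "C = X ** \<delta> ** transpose X"
  define D' where "D' = D - C"
  have "D' ** X = 0"
    by (simp add: D'_def C_def matrix_diff_rdistrib DX matrix_mul_assoc[symmetric] stiefel_transpose_mult[OF X])
  then have "(C - D') ** X = X ** \<delta>"
    by (simp add: C_def matrix_diff_rdistrib matrix_mul_assoc[symmetric] stiefel_transpose_mult[OF X])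
  moreover have "skew (C - D')"
    unfolding D'_def C_def using sk by (intro skew_diff skew_conj)
  ultimately have "(C - D', \<delta>) \<in> hsub X"
    using sk unfolding hsub_def by simp
  then have "D \<bullet> (C - D') - 2 * (\<delta> \<bullet> \<delta>) = 0"
    using orth ipso_skew[of "(D, \<delta>)"] sk by fastforce
  moreover have "D \<bullet> (C - D') = \<delta> \<bullet> \<delta> - D' \<bullet> D'"
  proof -
    have "D = C + D'" by (simp add: D'_def)
    then have "D \<bullet> (C - D') = C \<bullet> C - D' \<bullet> D'"
      by (simp add: inner_add_left inner_diff_right inner_commute[of D' C])
    then show ?thesis
      using inner_conj_stiefel[OF X, of \<delta> \<delta>] by (simp add: C_def)
  qed
  ultimately have "\<delta> \<bullet> \<delta> + D' \<bullet> D' = 0" by simp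
  then have "\<delta> = 0" "D' = 0"
    by (simp_all add: add_nonneg_eq_0_iff)
  then show ?thesis by (simp add: d_eq D'_def C_def zero_prod_def)
qed

(* Omega = (1 - X X^T) xi1 (1 - X X^T) + X eta X^T, expanded. *)
lemma hsub_ipso_projection:
  fixes X :: "real^'k^'n"
  assumes X: "X \<in> stiefel" and s1: "skew \<xi>1" and s2: "skew \<xi>2"
  defines "C \<equiv> transpose X ** \<xi>1 ** X"
  defines "\<eta> \<equiv> 2 *\<^sub>R \<xi>2 - C"
  defines "\<Omega> \<equiv> \<xi>1 - X ** transpose X ** \<xi>1 - \<xi>1 ** X ** transpose X
    + X ** C ** transpose X + X ** \<eta> ** transpose X"
  shows "(\<Omega>, \<eta>) \<in> hsub X" "\<forall>z\<in>hsub X. ipso ((\<xi>1, \<xi>2) - (\<Omega>, \<eta>)) z = 0"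
proof -
  have C: "skew C"
    using s1 unfolding C_def skew_def
    by (simp add: matrix_transpose_mul matrix_minus_left matrix_minus_right matrix_mul_assoc)
  have \<eta>: "skew \<eta>"
    using s2 C unfolding \<eta>_def skew_def by (simp add: transpose_diff transpose_scalar)
  have "skew \<Omega>"
    using s1 skew_conj[OF C, of X] skew_conj[OF \<eta>, of X] unfolding \<Omega>_def skew_def
    by (simp add: transpose_add transpose_diff matrix_transpose_mul matrix_minus_left matrix_minus_right matrix_mul_assoc)
  moreover have "\<Omega> ** X = X ** \<eta>"
    unfolding \<Omega>_def C_def
    by (simp add: matrix_add_rdistrib matrix_diff_rdistrib stiefel_mult_cancel[OF X] matrix_mul_assoc)
  ultimately show "(\<Omega>, \<eta>) \<in> hsub X"
    using \<eta> unfolding hsub_def by simp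
  show "\<forall>z\<in>hsub X. ipso ((\<xi>1, \<xi>2) - (\<Omega>, \<eta>)) z = 0"
  proof (intro ballI)
    fix z assume "z \<in> hsub X"
    then obtain A B where z: "z = (A, B)" and h: "(A, B) \<in> hsub X" by (cases z) auto
    have "\<xi>1 - \<Omega> = X ** transpose X ** \<xi>1 + \<xi>1 ** X ** transpose X
        - X ** C ** transpose X - X ** \<eta> ** transpose X"
      unfolding \<Omega>_def by (simp add: algebra_simps)
    then have "(\<xi>1 - \<Omega>) \<bullet> A = C \<bullet> B - \<eta> \<bullet> B"
      by (simp add: inner_diff_left inner_add_left hsub_inner_proj_left[OF h] hsub_inner_proj_right[OF h]
          hsub_inner_conj[OF X h] C_def)
    moreover have "skew (\<xi>1 - \<Omega>)" "skew (\<xi>2 - \<eta>)"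
      using s1 s2 \<open>skew \<Omega>\<close> \<eta> by (simp_all add: skew_diff)
    ultimately show "ipso ((\<xi>1, \<xi>2) - (\<Omega>, \<eta>)) z = 0"
      by (simp add: z ipso_skew inner_diff_left \<eta>_def)
  qed
qed

lemma hcomp_in_hsub:
  assumes X: "X \<in> stiefel" and "skew \<xi>1" "skew \<xi>2"
  shows "hcomp X (\<xi>1, \<xi>2) \<in> hsub X"
proof -
  have unique: "\<eta> = \<eta>'"
    if \<eta>: "\<eta> \<in> hsub X" "\<forall>z\<in>hsub X. ipso ((\<xi>1, \<xi>2) - \<eta>) z = 0"
      and \<eta>': "\<eta>' \<in> hsub X" "\<forall>z\<in>hsub X. ipso ((\<xi>1, \<xi>2) - \<eta>') z = 0" for \<eta> \<eta>'
  proof -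
    have "\<forall>z\<in>hsub X. ipso (\<eta>' - \<eta>) z = 0"
      using \<eta>(2) \<eta>'(2) ipso_diff_left[of "(\<xi>1, \<xi>2) - \<eta>" "(\<xi>1, \<xi>2) - \<eta>'"] by simp
    then have "\<eta>' - \<eta> = 0"
      by (rule hsub_ipso_orthogonal_eq_0[OF X hsub_diff[OF \<eta>'(1) \<eta>(1)]])
    then show ?thesis by simp
  qed
  have "\<exists>!\<eta>. \<eta> \<in> hsub X \<and> (\<forall>z\<in>hsub X. ipso ((\<xi>1, \<xi>2) - \<eta>) z = 0)"
    using hsub_ipso_projection[OF assms] unique by blast
  then show ?thesis
    unfolding hcomp_def by (rule theI'[THEN conjunct1])
qed

section \<open>The flow\<close>

locale normal_flow =
  fixes X :: "real^'k^'n" and \<xi>1 :: "real^'n^'n" and \<xi>2 :: "real^'k^'k"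
  assumes stiefel: "X \<in> stiefel" and skew_\<xi>1: "skew \<xi>1" and skew_\<xi>2: "skew \<xi>2"
begin

definition "\<xi>1h = fst (hcomp X (\<xi>1, \<xi>2))"

definition "\<xi>2h = snd (hcomp X (\<xi>1, \<xi>2))"

definition "\<xi>1p = fst (pcomp X (\<xi>1, \<xi>2))"

definition "\<xi>2p = snd (pcomp X (\<xi>1, \<xi>2))"

definition g :: "real \<Rightarrow> (real^'n^'n) \<times> (real^'k^'k)" where
  "g t = (mexp (t *\<^sub>R \<xi>1h), mexp (t *\<^sub>R \<xi>2h))"

definition Pf :: "real^'k^'n \<Rightarrow> real^'k^'n" where
  "Pf W = Pperp X (fmap (\<xi>1, \<xi>2) W)"

definition E :: "real \<Rightarrow> real^'k^'n \<Rightarrow> real^'k^'n" where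
  "E t V = exp_orbit (\<lambda>W. - Pf W) V t"

definition flow :: "real \<Rightarrow> real^'k^'n \<Rightarrow> real^'k^'n" where
  "flow t V = Phi (g t) (E t V)"

lemma xi_h_in_hsub: "(\<xi>1h, \<xi>2h) \<in> hsub X"
  using hcomp_in_hsub[OF stiefel skew_\<xi>1 skew_\<xi>2] by (simp add: \<xi>1h_def \<xi>2h_def)

lemma g_stabilizer: "g t \<in> stabilizer X"
  unfolding g_def by (rule mexp_hsub_stabilizer[OF xi_h_in_hsub])

lemma g_orthogonal: "orthogonal_matrix (fst (g t))" "orthogonal_matrix (snd (g t))"
  using g_stabilizer[of t] unfolding stabilizer_def by auto

lemma transpose_g:
  "transpose (fst (g t)) = mexp ((- t) *\<^sub>R \<xi>1h)" "transpose (snd (g t)) = mexp ((- t) *\<^sub>R \<xi>2h)"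
  using xi_h_in_hsub unfolding g_def hsub_def by (simp_all add: transpose_mexp_skew)

lemma xit_eq:
  "xit X (\<xi>1, \<xi>2) t =
    (fst (g t) ** \<xi>1p ** transpose (fst (g t)), snd (g t) ** \<xi>2p ** transpose (snd (g t)))"
  unfolding xit_def transpose_g by (simp add: g_def \<xi>1h_def \<xi>2h_def \<xi>1p_def \<xi>2p_def)

lemma xit_skew: "skew (fst (xit X (\<xi>1, \<xi>2) t))" "skew (snd (xit X (\<xi>1, \<xi>2) t))"
proof -
  have "skew \<xi>1h" "skew \<xi>2h"
    using xi_h_in_hsub by (simp_all add: hsub_def)
  moreover have "\<xi>1p = \<xi>1 - \<xi>1h" "\<xi>2p = \<xi>2 - \<xi>2h"
    by (simp_all add: \<xi>1p_def \<xi>2p_def \<xi>1h_def \<xi>2h_def pcomp_def)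
  ultimately have "skew \<xi>1p" "skew \<xi>2p"
    using skew_\<xi>1 skew_\<xi>2 by (simp_all add: skew_diff)
  then show "skew (fst (xit X (\<xi>1, \<xi>2) t))" "skew (snd (xit X (\<xi>1, \<xi>2) t))"
    by (simp_all add: xit_eq skew_conj)
qed

lemma bounded_linear_Pf: "bounded_linear Pf"
  unfolding Pf_def linear_conv_bounded_linear[symmetric]
  by (rule linear_compose[OF linear_fmap linear_Pperp, unfolded o_def])

lemma bounded_linear_minus_Pf: "bounded_linear (\<lambda>W. - Pf W)"
  by (rule bounded_linear_minus[OF bounded_linear_Pf])

lemma Pf_skew_adjoint: "V \<in> normal_sp X \<Longrightarrow> W \<in> normal_sp X \<Longrightarrow> Pf V \<bullet> W = - (V \<bullet> Pf W)"
  unfolding Pf_def using Pperp_fmap_skew_adjoint[OF stiefel] skew_\<xi>1 skew_\<xi>2 by simp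

lemma E_normal_sp: "V \<in> normal_sp X \<Longrightarrow> E t V \<in> normal_sp X"
  unfolding E_def
  by (rule exp_orbit_in_subspace[OF bounded_linear_minus_Pf subspace_normal_sp])
    (auto simp: Pf_def intro: subspace_neg[OF subspace_normal_sp] Pperp_in_normal_sp)

lemma E_0: "E 0 V = V"
  by (simp add: E_def)

lemma linear_E: "linear (E t)"
  using linear_exp_orbit[OF bounded_linear_minus_Pf] by (simp add: E_def[abs_def])

lemma E_has_vector_derivative: "((\<lambda>s. E s V) has_vector_derivative - Pf (E t V)) (at t within S)"
  unfolding E_def by (rule has_vector_derivative_exp_orbit[OF bounded_linear_minus_Pf])

lemma E_eq_opexp: "E t V = opexp (\<lambda>W. - (t *\<^sub>R Pperp X (fmap (\<xi>1, \<xi>2) W))) V"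
  using opexp_scaleR_eq_exp_orbit[OF bounded_linear.linear[OF bounded_linear_minus_Pf], of t V]
  by (simp add: E_def Pf_def)

lemma E_inner: "V \<in> normal_sp X \<Longrightarrow> W \<in> normal_sp X \<Longrightarrow> E t V \<bullet> E t W = V \<bullet> W"
  using skew_linear_ode_inner_const[OF convex_UNIV UNIV_I UNIV_I,
      of "\<lambda>s. E s V" "normal_sp X" "\<lambda>s. E s W" "\<lambda>_ U. - Pf U" t 0]
  by (simp add: E_normal_sp Pf_skew_adjoint E_has_vector_derivative E_0)

lemma E_add:
  assumes V: "V \<in> normal_sp X"
  shows "E s (E t V) = E (s + t) V"
proof (rule skew_linear_ode_unique[where y = "\<lambda>r. E r (E t V)" and z = "\<lambda>r. E (r + t) V"
      and a = 0 and t = s and A = "\<lambda>_ U. - Pf U" and I = UNIV and S = "normal_sp X"])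
  fix r :: real
  have "((\<lambda>s. E s V) \<circ> (\<lambda>s. s + t) has_vector_derivative 1 *\<^sub>R - Pf (E (r + t) V)) (at r)"
    by (rule vector_diff_chain_at) (auto intro!: derivative_eq_intros E_has_vector_derivative)
  then show "((\<lambda>r. E (r + t) V) has_vector_derivative - Pf (E (r + t) V)) (at r within UNIV)"
    by (simp add: o_def)
qed (use V in \<open>auto simp: subspace_normal_sp E_normal_sp E_0 Pf_skew_adjoint E_has_vector_derivative
    linear_compose_neg[OF bounded_linear.linear[OF bounded_linear_Pf], unfolded o_def]\<close>)

lemma flow_0: "flow 0 V = V"
  by (simp add: flow_def g_def Phi_def E_0)

lemma flow_normal_sp: "V \<in> normal_sp X \<Longrightarrow> flow t V \<in> normal_sp X"
  unfolding flow_def by (intro Phi_normal_sp[OF stiefel g_stabilizer] E_normal_sp)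

lemma linear_flow: "linear (flow t)"
  unfolding flow_def[abs_def] by (rule linear_compose[OF linear_E linear_Phi, unfolded o_def])

lemma flow_inner: "V \<in> normal_sp X \<Longrightarrow> W \<in> normal_sp X \<Longrightarrow> flow t V \<bullet> flow t W = V \<bullet> W"
  using Phi_inner[OF g_orthogonal, of t t] by (simp add: flow_def E_inner)

lemma flow_surj: "flow t ` normal_sp X = normal_sp X"
proof
  show "flow t ` normal_sp X \<subseteq> normal_sp X" using flow_normal_sp by blast
  show "normal_sp X \<subseteq> flow t ` normal_sp X"
  proof
    fix V assume V: "V \<in> normal_sp X"
    obtain G1 G2 where g: "g t = (G1, G2)" by (cases "g t")
    have gT: "(transpose G1, transpose G2) \<in> stabilizer X"
      using stabilizer_transpose_closed g_stabilizer[of t] by (simp add: g)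
    then have W: "Phi (transpose G1, transpose G2) V \<in> normal_sp X"
      by (rule Phi_normal_sp[OF stiefel _ V])
    have "flow t (E (- t) (Phi (transpose G1, transpose G2) V)) = V"
      using Phi_transpose_Phi[of "transpose G1" "transpose G2" V] g_orthogonal[of t]
      by (simp add: flow_def E_add[OF W] E_0 g)
    moreover have "E (- t) (Phi (transpose G1, transpose G2) V) \<in> normal_sp X"
      by (rule E_normal_sp[OF W])
    ultimately show "V \<in> flow t ` normal_sp X" by (metis image_eqI)
  qed
qed

lemma xi_eq_h_plus_p: "(\<xi>1, \<xi>2) = (\<xi>1h, \<xi>2h) + (\<xi>1p, \<xi>2p)"
  by (simp add: \<xi>1h_def \<xi>2h_def \<xi>1p_def \<xi>2p_def pcomp_def prod_eq_iff)

lemma fmap_xi_h_minus_Pf: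
  assumes "Y \<in> normal_sp X"
  shows "fmap (\<xi>1h, \<xi>2h) Y - Pf Y = - Pperp X (fmap (\<xi>1p, \<xi>2p) Y)"
proof -
  have "Pperp X (fmap (\<xi>1h, \<xi>2h) Y) = fmap (\<xi>1h, \<xi>2h) Y"
    by (rule Pperp_normal_sp[OF stiefel fmap_hsub_normal_sp[OF xi_h_in_hsub assms]])
  then show ?thesis
    unfolding Pf_def xi_eq_h_plus_p fmap_add_left linear_add[OF linear_Pperp] by simp
qed

lemma flow_has_vector_derivative:
  assumes V: "V \<in> normal_sp X"
  shows "((\<lambda>s. flow s V) has_vector_derivative - Pperp X (fmap (xit X (\<xi>1, \<xi>2) t) (flow t V)))
    (at t within S)"
proof -
  define G where "G s = mexp (s *\<^sub>R \<xi>1h)" for s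
  define H where "H s = mexp (s *\<^sub>R - \<xi>2h)" for s
  let ?Y = "E t V"
  have Phi_g: "Phi (g s) U = G s ** U ** H s" for s U
    using transpose_g(2)[of s] by (simp add: Phi_def g_def G_def H_def)
  have "((\<lambda>s. G s ** E s V) has_vector_derivative G t ** (- Pf ?Y) + (\<xi>1h ** G t) ** ?Y) (at t within S)"
    unfolding G_def
    by (rule bounded_bilinear.has_vector_derivative[OF bounded_bilinear_matrix_mult
          has_vector_derivative_mexp_scaleR E_has_vector_derivative])
  then have "((\<lambda>s. G s ** E s V ** H s) has_vector_derivative
      (G t ** ?Y) ** (- \<xi>2h ** H t) + (G t ** (- Pf ?Y) + (\<xi>1h ** G t) ** ?Y) ** H t) (at t within S)"
    unfolding H_def
    by (rule bounded_bilinear.has_vector_derivative[OF bounded_bilinear_matrix_mult _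
          has_vector_derivative_mexp_scaleR])
  moreover have "\<xi>1h ** G t = G t ** \<xi>1h"
    using mexp_scaleR_intertwine[of \<xi>1h \<xi>1h \<xi>1h t] by (simp add: G_def)
  then have "(G t ** ?Y) ** (- \<xi>2h ** H t) + (G t ** (- Pf ?Y) + (\<xi>1h ** G t) ** ?Y) ** H t =
      Phi (g t) (fmap (\<xi>1h, \<xi>2h) ?Y - Pf ?Y)"
    by (simp add: Phi_g fmap_def matrix_algebra_simps)
  also have "\<dots> = - Pperp X (fmap (xit X (\<xi>1, \<xi>2) t) (flow t V))"
    using Phi_Pperp[of "fst (g t)" "snd (g t)" X] g_stabilizer[of t] Phi_fmap[OF g_orthogonal, of t t]
    by (simp add: fmap_xi_h_minus_Pf[OF E_normal_sp[OF V]] linear_neg[OF linear_Phi] flow_def xit_eq)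
  finally show ?thesis
    by (simp add: flow_def Phi_g)
qed

lemma flow_is_solution: "is_solution X (\<xi>1, \<xi>2) I flow"
  unfolding is_solution_def
  by (simp add: flow_normal_sp linear_add[OF linear_flow] linear_scale[OF linear_flow] flow_0
      flow_has_vector_derivative)

lemma flow_in_orth_normal: "in_orth_normal X (flow t)"
  unfolding in_orth_normal_def
  by (simp add: flow_surj flow_inner linear_add[OF linear_flow] linear_scale[OF linear_flow])

lemma solution_eq_flow:
  assumes I: "is_interval I" "0 \<in> I" and T: "is_solution X (\<xi>1, \<xi>2) I T"
    and t: "t \<in> I" and V: "V \<in> normal_sp X"
  shows "T t V = flow t V"
proof (rule skew_linear_ode_unique[where y = "\<lambda>s. T s V" and z = "\<lambda>s. flow s V" and a = 0
      and A = "\<lambda>s U. - Pperp X (fmap (xit X (\<xi>1, \<xi>2) s) U)" and S = "normal_sp X"])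
  show "convex I" by (rule is_interval_convex[OF I(1)])
  fix r u w assume "r \<in> I" "u \<in> normal_sp X" "w \<in> normal_sp X"
  then show "- Pperp X (fmap (xit X (\<xi>1, \<xi>2) r) u) \<bullet> w =
      - (u \<bullet> - Pperp X (fmap (xit X (\<xi>1, \<xi>2) r) w))"
    using Pperp_fmap_skew_adjoint[OF stiefel xit_skew] by simp
qed (use I t V T in \<open>auto simp: is_solution_def flow_normal_sp flow_has_vector_derivative flow_0
    subspace_normal_sp linear_compose_neg[OF linear_compose[OF linear_fmap linear_Pperp], unfolded o_def]\<close>)

end

theorem lemma5p17:
  fixes X :: "real^'k^'n" and xi1 :: "real^'n^'n" and xi2 :: "real^'k^'k" and I :: "real set"
  assumes "X \<in> stiefel"
    and "skew xi1" and "skew xi2"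
    and "is_interval I" and "0 \<in> I"
  defines "Tsol \<equiv> (\<lambda>t V. Phi (mexp (t *\<^sub>R fst (hcomp X (xi1, xi2))), mexp (t *\<^sub>R snd (hcomp X (xi1, xi2))))
                    (opexp (\<lambda>W. - (t *\<^sub>R Pperp X (fmap (xi1, xi2) W))) V))"
  shows "is_solution X (xi1, xi2) I Tsol
    \<and> (\<forall>t\<in>I. in_orth_normal X (Tsol t))
    \<and> (\<forall>T. is_solution X (xi1, xi2) I T \<longrightarrow> (\<forall>t\<in>I. \<forall>V\<in>normal_sp X. T t V = Tsol t V))"
proof -
  interpret normal_flow X xi1 xi2
    using assms(1-3) by unfold_locales
  have "Tsol = flow"
    by (intro ext) (simp add: Tsol_def flow_def g_def \<xi>1h_def \<xi>2h_def E_eq_opexp)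
  then show ?thesis
    using flow_is_solution flow_in_orth_normal solution_eq_flow[OF assms(4,5)] by blast
qed

end
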